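(* Let $\mathcal{X}$ be a finite set, $T>0$, $\alpha>0$, $r:\mathcal{X}\to\mathbb{R}$ a reward function, and $Q^{\mathrm{pre}}(t)$, $t\in[0,T]$, a pretrained time-dependent CTMC generator on $\mathcal{X}$. Consider all CTMCs $(x_t)_{t\in[0,T]}$ started from the fixed initial distribution $p_{\lim}$ (a Dirac mass at a single state) and driven by a generator $Q(t)$, and let $Q^{\star}$ maximize, over all such generators (the fully nonparametric/realizable class), the objective $$J(Q)=\mathbb{E}_{x_{0:T}\sim P^{Q}}\big[r(x_T)\big]-\alpha\,\mathbb{E}_{x_{0:T}\sim P^{Q}}\Big[\int_0^T\sum_{y\neq x_t}\Big\{Q^{\mathrm{pre}}_{x_t,y}(t)-Q_{x_t,y}(t)+Q_{x_t,y}(t)\log\frac{Q_{x_t,y}(t)}{Q^{\mathrm{pre}}_{x_t,y}(t)}\Big\}dt\Big].$$ Then the distribution at time $T$ of the CTMC with generator $Q^{\star}$ started from $p_{\lim}$ is proportional to $\exp(r(x)/\alpha)\,p^{\mathrm{pre}}(x)$, where $p^{\mathrm{pre}}$ is the time-$T$ distribution of the CTMC with generator $Q^{\mathrm{pre}}$ started from $p_{\lim}$.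
   Context: A (time-dependent) CTMC generator on a finite set $\mathcal{X}$ is a family of matrices $Q(t)=(Q_{x,y}(t))_{x,y\in\mathcal{X}}$ with $Q_{x,y}(t)\ge 0$ for $x\neq y$ (the transition rate from $x$ to $y$) and $Q_{x,x}(t)=-\sum_{y\neq x}Q_{x,y}(t)$; the marginals $p_t$ satisfy the Kolmogorov forward equation $\frac{d p_t(x)}{dt}=\sum_{y\neq x}Q_{y,x}(t)p_t(y)-\sum_{y\neq x}Q_{x,y}(t)p_t(x)$, i.e. $P(x_{t+dt}=y\mid x_t=x)=\mathbb{1}(x=y)+Q_{x,y}(t)\,dt$. $P^{Q}$ denotes the path law of the CTMC with generator $Q$ on $[0,T]$ started at $p_{\lim}$. The convention $0\log(0/0)=0$ is used, and generators are assumed regular enough (e.g. continuous in $t$) that the forward/backward Kolmogorov equations have unique solutions. The second term of $J$ is the KL divergence between the path measures $P^{Q}$ and $P^{Q^{\mathrm{pre}}}$. *)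

theory Defs
  imports "HOL-Analysis.Analysis"
begin

definition is_generator :: "real \<Rightarrow> (real \<Rightarrow> 'x::finite \<Rightarrow> 'x \<Rightarrow> real) \<Rightarrow> bool" where
  "is_generator T Q \<longleftrightarrow>
     (\<forall>t\<in>{0..T}. \<forall>x y. x \<noteq> y \<longrightarrow> Q t x y \<ge> 0) \<and>
     (\<forall>t\<in>{0..T}. \<forall>x. Q t x x = - (\<Sum>y\<in>UNIV - {x}. Q t x y)) \<and>
     (\<forall>x y. continuous_on {0..T} (\<lambda>t. Q t x y))"

definition forward_sol ::
  "real \<Rightarrow> (real \<Rightarrow> 'x::finite \<Rightarrow> 'x \<Rightarrow> real) \<Rightarrow> ('x \<Rightarrow> real) \<Rightarrow> (real \<Rightarrow> 'x \<Rightarrow> real) \<Rightarrow> bool" where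
  "forward_sol T Q p0 p \<longleftrightarrow>
     p 0 = p0 \<and>
     (\<forall>t\<in>{0..T}. \<forall>x. ((\<lambda>s. p s x) has_real_derivative
        ((\<Sum>y\<in>UNIV - {x}. Q t y x * p t y) - (\<Sum>y\<in>UNIV - {x}. Q t x y * p t x)))
        (at t within {0..T}))"

definition dirac :: "'x \<Rightarrow> 'x \<Rightarrow> real" where
  "dirac x0 = (\<lambda>x. if x = x0 then 1 else 0)"

text \<open>Pointwise KL-rate term  b - a + a log(a/b)  with a = Q, b = Qpre,
  convention 0 log(0/0) = 0 and value +\<infinity> if a > 0 = b.\<close>
definition kl_rate :: "real \<Rightarrow> real \<Rightarrow> ennreal" where
  "kl_rate a b = (if a = 0 then ennreal b
                  else if b = 0 then \<infinity>
                  else ennreal (b - a + a * ln (a / b)))"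

text \<open>Path KL divergence KL(P^Q || P^Qpre), written via the marginals p of P^Q
  (expectation of the time integral = time integral of the expectation).\<close>
definition path_kl ::
  "real \<Rightarrow> (real \<Rightarrow> 'x::finite \<Rightarrow> 'x \<Rightarrow> real) \<Rightarrow> (real \<Rightarrow> 'x \<Rightarrow> 'x \<Rightarrow> real) \<Rightarrow> (real \<Rightarrow> 'x \<Rightarrow> real) \<Rightarrow> ennreal" where
  "path_kl T Qpre Q p =
     (\<integral>\<^sup>+ t\<in>{0..T}. (\<Sum>x\<in>UNIV. ennreal (p t x) *
         (\<Sum>y\<in>UNIV - {x}. kl_rate (Q t x y) (Qpre t x y))) \<partial>lborel)"

definition J_obj ::
  "real \<Rightarrow> real \<Rightarrow> ('x::finite \<Rightarrow> real) \<Rightarrow> (real \<Rightarrow> 'x \<Rightarrow> 'x \<Rightarrow> real) \<Rightarrow>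
   (real \<Rightarrow> 'x \<Rightarrow> 'x \<Rightarrow> real) \<Rightarrow> (real \<Rightarrow> 'x \<Rightarrow> real) \<Rightarrow> ereal" where
  "J_obj T \<alpha> r Qpre Q p =
     ereal (\<Sum>x\<in>UNIV. p T x * r x) - ereal \<alpha> * enn2ereal (path_kl T Qpre Q p)"

end

theory Submission
  imports Defs
begin

text \<open>Let h solve the backward Kolmogorov equation of Qpre with terminal value h T = exp g.
  For any generator Q with marginals p, the derivative of \<Sum>x. p t x \<cdot> ln (h t x) is bounded
  pointwise by the KL rate (Legendre duality); integrating gives
  E[g(x_T)] - ln E_pre[exp g(x_T)] \<le> KL(P^Q || P^Qpre), with equality for the Doob h-transform of Qpre, whose terminal law is proportional to exp g \<cdot> ppre T.  Hence the
  optimal value of J is \<alpha> ln E_pre[exp (r / \<alpha>)], and for a maximizer Q* the function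
  g \<mapsto> E_{p* T}[g] - ln E_pre[exp g] is maximal at g = r / \<alpha>; its first-order conditions
  give p* T \<propto> exp (r / \<alpha>) \<cdot> ppre T.  The backward solution is built by Picard iteration,
  and nonnegativity of forward marginals follows from a first-exit argument.\<close>

section \<open>Generators and the forward equation\<close>

lemma is_generator_offdiag_nonneg:
  "is_generator T Q \<Longrightarrow> t \<in> {0..T} \<Longrightarrow> x \<noteq> y \<Longrightarrow> 0 \<le> Q t x y"
  unfolding is_generator_def by blast

lemma is_generator_continuous:
  "is_generator T Q \<Longrightarrow> continuous_on {0..T} (\<lambda>t. Q t x y)"
  unfolding is_generator_def by blast

lemma is_generator_diag:
  "is_generator T Q \<Longrightarrow> t \<in> {0..T} \<Longrightarrow> Q t x x = - (\<Sum>y\<in>UNIV - {x}. Q t x y)"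
  unfolding is_generator_def by blast

lemma continuous_on_entries_bounded:
  fixes M :: "real \<Rightarrow> 'x::finite \<Rightarrow> 'y::finite \<Rightarrow> real"
  assumes "\<And>x y. continuous_on {a..b} (\<lambda>t. M t x y)"
  obtains B where "\<And>t x y. t \<in> {a..b} \<Longrightarrow> \<bar>M t x y\<bar> \<le> B"
proof -
  have "\<exists>B. \<forall>t\<in>{a..b}. \<bar>M t (fst p) (snd p)\<bar> \<le> B" for p
  proof -
    have "compact ((\<lambda>t. M t (fst p) (snd p)) ` {a..b})"
      using assms by (intro compact_continuous_image) auto
    then have "bounded ((\<lambda>t. M t (fst p) (snd p)) ` {a..b})" by (rule compact_imp_bounded)
    then show ?thesis unfolding bounded_iff by auto
  qed
  then obtain B where B: "\<And>p t. t \<in> {a..b} \<Longrightarrow> \<bar>M t (fst p) (snd p)\<bar> \<le> B p"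
    by metis
  have "\<bar>M t x y\<bar> \<le> (\<Sum>p\<in>UNIV. \<bar>B p\<bar>)" if "t \<in> {a..b}" for t x y
  proof -
    have "\<bar>M t x y\<bar> \<le> \<bar>B (x, y)\<bar>" using B[OF that, of "(x, y)"] by simp
    also have "\<dots> \<le> (\<Sum>p\<in>UNIV. \<bar>B p\<bar>)" by (rule member_le_sum) auto
    finally show ?thesis .
  qed
  then show thesis by (rule that)
qed

lemma abs_sum_le_card_mult:
  fixes f :: "'a \<Rightarrow> real"
  assumes "\<And>y. y \<in> A \<Longrightarrow> \<bar>f y\<bar> \<le> B"
  shows "\<bar>\<Sum>y\<in>A. f y\<bar> \<le> real (card A) * B"
proof -
  have "\<bar>\<Sum>y\<in>A. f y\<bar> \<le> (\<Sum>y\<in>A. \<bar>f y\<bar>)" by (rule sum_abs)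
  also have "\<dots> \<le> real (card A) * B" by (rule sum_bounded_above) (use assms in auto)
  finally show ?thesis .
qed

lemma sum_offdiag_swap:
  fixes f :: "'x::finite \<Rightarrow> 'x \<Rightarrow> 'a::comm_monoid_add"
  shows "(\<Sum>x\<in>UNIV. \<Sum>y\<in>UNIV - {x}. f x y) = (\<Sum>y\<in>UNIV. \<Sum>x\<in>UNIV - {y}. f x y)"
proof -
  have "(\<Sum>x\<in>UNIV. \<Sum>y\<in>UNIV - {x}. f x y) = (\<Sum>x\<in>UNIV. \<Sum>y\<in>{y. y \<in> UNIV \<and> x \<noteq> y}. f x y)"
    by (intro sum.cong) auto
  also have "\<dots> = (\<Sum>y\<in>UNIV. \<Sum>x\<in>{x. x \<in> UNIV \<and> x \<noteq> y}. f x y)"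
    by (rule sum.swap_restrict) auto
  also have "\<dots> = (\<Sum>y\<in>UNIV. \<Sum>x\<in>UNIV - {y}. f x y)"
    by (intro sum.cong) auto
  finally show ?thesis .
qed

lemma sum_split_diag:
  fixes f :: "'x::finite \<Rightarrow> 'a::comm_monoid_add"
  shows "(\<Sum>y\<in>UNIV. f y) = f x + (\<Sum>y\<in>UNIV - {x}. f y)"
  by (simp add: sum.remove)

lemma forward_rhs_eq:
  assumes "is_generator T Q" "t \<in> {0..T}"
  shows "(\<Sum>y\<in>UNIV - {x}. Q t y x * p y) - (\<Sum>y\<in>UNIV - {x}. Q t x y * p x)
       = (\<Sum>y\<in>UNIV. Q t y x * p y)"
  using is_generator_diag[OF assms, of x]
  by (simp add: sum_split_diag[of _ x] sum_distrib_right)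

lemma backward_rhs_eq:
  assumes "is_generator T Q" "t \<in> {0..T}"
  shows "(\<Sum>y\<in>UNIV - {x}. Q t x y * (h y - h x)) = (\<Sum>y\<in>UNIV. Q t x y * h y)"
  using is_generator_diag[OF assms, of x]
  by (simp add: sum_split_diag[of _ x] right_diff_distrib sum_subtractf sum_distrib_right)

text \<open>A first-exit argument: the first time some coordinate of w vanishes, that coordinate
  would have to be strictly increasing, which it cannot be while leaving the positive region.\<close>
lemma positive_if_increasing_at_zeros:
  fixes w :: "real \<Rightarrow> 'x::finite \<Rightarrow> real"
  assumes cont: "\<And>x. continuous_on {0..T} (\<lambda>s. w s x)"
    and init: "\<And>x. 0 < w 0 x"
    and incr: "\<And>t x. t \<in> {0..T} \<Longrightarrow> w t x = 0 \<Longrightarrow> (\<And>y. 0 \<le> w t y) \<Longrightarrow>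
                 \<exists>D>0. ((\<lambda>s. w s x) has_real_derivative D) (at t within {0..T})"
    and t: "t \<in> {0..T}"
  shows "0 < w t x"
proof (rule ccontr)
  assume "\<not> 0 < w t x"
  define S where "S = (\<Union>y. {0..T} \<inter> (\<lambda>s. w s y) -` {..0})"
  have "t \<in> S" using \<open>\<not> 0 < w t x\<close> t unfolding S_def by (auto simp: not_less)
  moreover have "closed S"
    unfolding S_def by (intro closed_Union) (auto intro!: continuous_closed_preimage cont)
  moreover have Sbdd: "bdd_below S" unfolding S_def by (rule bdd_belowI[of _ 0]) auto
  ultimately have "Inf S \<in> S" by (intro closed_contains_Inf) auto
  then obtain t1 x1 where t1_def: "t1 = Inf S" and t1: "t1 \<in> {0..T}" and "w t1 x1 \<le> 0"
    unfolding S_def by auto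
  have t1_pos: "0 < t1" using t1 \<open>w t1 x1 \<le> 0\<close> init[of x1] by (cases "t1 = 0") auto
  have before: "0 < w s y" if "s \<in> {0..<t1}" for s y
  proof (rule ccontr)
    assume "\<not> 0 < w s y"
    then have "s \<in> S" using that t1 unfolding S_def by (auto simp: not_less)
    then show False using cInf_lower[OF _ Sbdd] that unfolding t1_def by force
  qed
  have at_t1: "0 \<le> w t1 y" for y
  proof -
    have "closure {0..<t1} \<subseteq> {0..T} \<inter> (\<lambda>s. w s y) -` {0..}"
      using before t1 by (intro closure_minimal continuous_closed_preimage cont)
                         (auto simp: less_imp_le)
    then show ?thesis using t1_pos by (auto simp: subset_iff)
  qed
  then have "w t1 x1 = 0" using \<open>w t1 x1 \<le> 0\<close> by (simp add: order_antisym)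
  then obtain D where "0 < D" and D: "((\<lambda>s. w s x1) has_real_derivative D) (at t1 within {0..T})"
    using incr[OF t1] at_t1 by blast
  then obtain d where "0 < d"
    and d: "\<And>h. 0 < h \<Longrightarrow> t1 - h \<in> {0..T} \<Longrightarrow> h < d \<Longrightarrow> w (t1 - h) x1 < w t1 x1"
    using has_real_derivative_pos_inc_left by blast
  define h where "h = min (d / 2) t1"
  have "w (t1 - h) x1 < 0" using d[of h] \<open>0 < d\<close> t1_pos t1 \<open>w t1 x1 = 0\<close> by (auto simp: h_def)
  moreover have "0 < w (t1 - h) x1" using before \<open>0 < d\<close> t1_pos by (auto simp: h_def)
  ultimately show False by simp
qed

text \<open>The perturbation \<epsilon> exp (K t) with K = card X \<cdot> B + 1 dominates the possibly negative
  diagonal rates, which makes the first-exit argument applicable.\<close>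
lemma linear_ode_perturbation_pos:
  fixes u :: "real \<Rightarrow> 'x::finite \<Rightarrow> real" and C :: "real \<Rightarrow> 'x \<Rightarrow> 'x \<Rightarrow> real"
  assumes bound: "\<And>t x y. t \<in> {0..T} \<Longrightarrow> \<bar>C t x y\<bar> \<le> B"
    and offdiag: "\<And>t x y. t \<in> {0..T} \<Longrightarrow> x \<noteq> y \<Longrightarrow> 0 \<le> C t x y"
    and deriv: "\<And>t x. t \<in> {0..T} \<Longrightarrow>
      ((\<lambda>s. u s x) has_real_derivative (\<Sum>y\<in>UNIV. C t x y * u t y)) (at t within {0..T})"
    and init: "\<And>x. 0 \<le> u 0 x"
    and "0 < \<epsilon>" and t: "t \<in> {0..T}"
  shows "0 < u t x + \<epsilon> * exp ((real CARD('x) * B + 1) * t)"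
proof -
  define K where "K = real CARD('x) * B + 1"
  have cont_u: "continuous_on {0..T} (\<lambda>s. u s x)" for x
    using deriv by (intro DERIV_continuous_on) blast
  have "0 < u t x + \<epsilon> * exp (K * t)"
  proof (rule positive_if_increasing_at_zeros[where w = "\<lambda>s y. u s y + \<epsilon> * exp (K * s)", OF _ _ _ t])
    show "continuous_on {0..T} (\<lambda>s. u s x + \<epsilon> * exp (K * s))" for x
      by (intro continuous_intros cont_u)
    show "0 < u 0 x + \<epsilon> * exp (K * 0)" for x using init[of x] \<open>0 < \<epsilon>\<close> by simp
  next
    fix s x
    assume s: "s \<in> {0..T}" and zero: "u s x + \<epsilon> * exp (K * s) = 0"
      and nonneg: "\<And>y. 0 \<le> u s y + \<epsilon> * exp (K * s)"
    define e where "e = \<epsilon> * exp (K * s)"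
    have "0 < e" using \<open>0 < \<epsilon>\<close> by (simp add: e_def)
    define D where "D = (\<Sum>y\<in>UNIV. C s x y * u s y) + \<epsilon> * (K * exp (K * s))"
    have "((\<lambda>s. u s x + \<epsilon> * exp (K * s)) has_real_derivative D) (at s within {0..T})"
      unfolding D_def using deriv[OF s] by (auto intro!: derivative_eq_intros)
    moreover have "0 < D"
    proof -
      have "0 \<le> (\<Sum>y\<in>UNIV. C s x y * (u s y + e))"
        using offdiag[OF s] nonneg zero
        by (intro sum_nonneg) (metis e_def mult_nonneg_nonneg order_refl mult_zero_right)
      moreover have "(\<Sum>y\<in>UNIV. C s x y) \<le> real CARD('x) * B"
        using abs_sum_le_card_mult[of UNIV "C s x" B] bound[OF s] by auto
      then have "e * (\<Sum>y\<in>UNIV. C s x y) \<le> e * (real CARD('x) * B)"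
        using \<open>0 < e\<close> by (simp add: mult_left_mono)
      moreover have "(\<Sum>y\<in>UNIV. C s x y * (u s y + e))
                     = (\<Sum>y\<in>UNIV. C s x y * u s y) + e * (\<Sum>y\<in>UNIV. C s x y)"
        by (simp add: algebra_simps sum.distrib sum_distrib_left)
      moreover have "D = (\<Sum>y\<in>UNIV. C s x y * u s y) + e * (real CARD('x) * B) + e"
        by (simp add: D_def e_def K_def algebra_simps)
      ultimately show ?thesis using \<open>0 < e\<close> by linarith
    qed
    ultimately show "\<exists>D>0. ((\<lambda>s. u s x + \<epsilon> * exp (K * s)) has_real_derivative D) (at s within {0..T})"
      by blast
  qed
  then show ?thesis by (simp add: K_def)
qed

lemma linear_ode_nonneg:
  fixes u :: "real \<Rightarrow> 'x::finite \<Rightarrow> real" and C :: "real \<Rightarrow> 'x \<Rightarrow> 'x \<Rightarrow> real"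
  assumes bound: "\<And>t x y. t \<in> {0..T} \<Longrightarrow> \<bar>C t x y\<bar> \<le> B"
    and offdiag: "\<And>t x y. t \<in> {0..T} \<Longrightarrow> x \<noteq> y \<Longrightarrow> 0 \<le> C t x y"
    and deriv: "\<And>t x. t \<in> {0..T} \<Longrightarrow>
      ((\<lambda>s. u s x) has_real_derivative (\<Sum>y\<in>UNIV. C t x y * u t y)) (at t within {0..T})"
    and init: "\<And>x. 0 \<le> u 0 x"
    and t: "t \<in> {0..T}"
  shows "0 \<le> u t x"
proof (rule ccontr)
  define K where "K = real CARD('x) * B + 1"
  assume "\<not> 0 \<le> u t x"
  then have "0 < - u t x / (2 * exp (K * t))" by (simp add: divide_neg_pos)
  from linear_ode_perturbation_pos[where x = x, OF bound offdiag deriv init this t] \<open>\<not> 0 \<le> u t x\<close>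
  show False by (simp add: K_def)
qed

lemma forward_sol_nonneg:
  assumes gen: "is_generator T Q" and fwd: "forward_sol T Q p0 p"
    and p0: "\<And>x. 0 \<le> p0 x" and t: "t \<in> {0..T}"
  shows "0 \<le> p t x"
proof -
  obtain B where B: "\<And>t x y. t \<in> {0..T} \<Longrightarrow> \<bar>Q t x y\<bar> \<le> B"
    using continuous_on_entries_bounded is_generator_continuous[OF gen] by metis
  show ?thesis
  proof (rule linear_ode_nonneg[where C = "\<lambda>t x y. Q t y x", OF B _ _ _ t])
    show "\<And>t x y. t \<in> {0..T} \<Longrightarrow> x \<noteq> y \<Longrightarrow> 0 \<le> Q t y x"
      using is_generator_offdiag_nonneg[OF gen] by auto
    show "((\<lambda>s. p s x) has_real_derivative (\<Sum>y\<in>UNIV. Q t y x * p t y)) (at t within {0..T})"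
      if "t \<in> {0..T}" for t x
    proof -
      have "((\<lambda>s. p s x) has_real_derivative
              (\<Sum>y\<in>UNIV - {x}. Q t y x * p t y) - (\<Sum>y\<in>UNIV - {x}. Q t x y * p t x)) (at t within {0..T})"
        using fwd that unfolding forward_sol_def by blast
      then show ?thesis by (simp only: forward_rhs_eq[OF gen that])
    qed
    show "0 \<le> p 0 x" for x using fwd p0 unfolding forward_sol_def by simp
  qed
qed

lemma forward_sol_continuous: "forward_sol T Q p0 p \<Longrightarrow> continuous_on {0..T} (\<lambda>t. p t x)"
  unfolding forward_sol_def by (intro DERIV_continuous_on) blast

section \<open>The backward equation\<close>

text \<open>k = backward_picard T M c k is the integral form of k' = - M k with k T = c.\<close>
definition backward_picard ::
  "real \<Rightarrow> (real \<Rightarrow> 'x::finite \<Rightarrow> 'x \<Rightarrow> real) \<Rightarrow> ('x \<Rightarrow> real) \<Rightarrow> (real \<Rightarrow> 'x \<Rightarrow> real) \<Rightarrow> real \<Rightarrow> 'x \<Rightarrow> real"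
  where "backward_picard T M c k t x = c x + integral {t..T} (\<lambda>s. \<Sum>y\<in>UNIV. M s x y * k s y)"

definition picard_iterate ::
  "real \<Rightarrow> (real \<Rightarrow> 'x::finite \<Rightarrow> 'x \<Rightarrow> real) \<Rightarrow> ('x \<Rightarrow> real) \<Rightarrow> nat \<Rightarrow> real \<Rightarrow> 'x \<Rightarrow> real"
  where "picard_iterate T M c n = (backward_picard T M c ^^ n) (\<lambda>_ _. 0)"

definition picard_limit ::
  "real \<Rightarrow> (real \<Rightarrow> 'x::finite \<Rightarrow> 'x \<Rightarrow> real) \<Rightarrow> ('x \<Rightarrow> real) \<Rightarrow> real \<Rightarrow> 'x \<Rightarrow> real"
  where "picard_limit T M c t x = (\<Sum>n. picard_iterate T M c (Suc n) t x - picard_iterate T M c n t x)"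

lemma picard_iterate_0 [simp]: "picard_iterate T M c 0 = (\<lambda>_ _. 0)"
  by (simp add: picard_iterate_def)

lemma picard_iterate_Suc:
  "picard_iterate T M c (Suc n) = backward_picard T M c (picard_iterate T M c n)"
  by (simp add: picard_iterate_def)

lemma power_has_integral_backward:
  fixes t T :: real
  assumes "t \<le> T"
  shows "((\<lambda>s. (T - s) ^ n) has_integral (T - t) ^ Suc n / real (Suc n)) {t..T}"
proof -
  have "((\<lambda>s. (T - s) ^ n) has_integral
          (- ((T - T) ^ Suc n / real (Suc n))) - (- ((T - t) ^ Suc n / real (Suc n)))) {t..T}"
  proof (rule fundamental_theorem_of_calculus[OF assms])
    fix s
    have "((\<lambda>s. - ((T - s) ^ Suc n / real (Suc n))) has_real_derivative (T - s) ^ n) (at s within {t..T})"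
      by (auto intro!: derivative_eq_intros simp del: power_Suc)
    then show "((\<lambda>s. - ((T - s) ^ Suc n / real (Suc n))) has_vector_derivative (T - s) ^ n) (at s within {t..T})"
      by (simp add: has_real_derivative_iff_has_vector_derivative)
  qed
  then show ?thesis by simp
qed

context
  fixes T B :: real and M :: "real \<Rightarrow> 'x::finite \<Rightarrow> 'x \<Rightarrow> real" and c :: "'x \<Rightarrow> real"
  assumes cont_M: "\<And>x y. continuous_on {0..T} (\<lambda>t. M t x y)"
    and bound_M: "\<And>t x y. t \<in> {0..T} \<Longrightarrow> \<bar>M t x y\<bar> \<le> B"
begin

lemma backward_integrand_continuous:
  "(\<And>y. continuous_on {0..T} (\<lambda>s. k s y)) \<Longrightarrow> continuous_on {0..T} (\<lambda>s. \<Sum>y\<in>UNIV. M s x y * k s y)"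
  by (intro continuous_intros cont_M)

lemma backward_picard_has_derivative:
  assumes k: "\<And>y. continuous_on {0..T} (\<lambda>s. k s y)" and t: "t \<in> {0..T}"
  shows "((\<lambda>s. backward_picard T M c k s x) has_real_derivative - (\<Sum>y\<in>UNIV. M t x y * k t y))
           (at t within {0..T})"
  using integral_has_real_derivative'[OF backward_integrand_continuous[OF k] t]
  unfolding backward_picard_def by (auto intro!: derivative_eq_intros)

lemma backward_picard_continuous:
  "(\<And>y. continuous_on {0..T} (\<lambda>s. k s y)) \<Longrightarrow> continuous_on {0..T} (\<lambda>s. backward_picard T M c k s x)"
  by (rule DERIV_continuous_on) (rule backward_picard_has_derivative)

lemma backward_picard_diff:
  assumes k1: "\<And>y. continuous_on {0..T} (\<lambda>s. k1 s y)" and k2: "\<And>y. continuous_on {0..T} (\<lambda>s. k2 s y)"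
    and t: "t \<in> {0..T}"
  shows "backward_picard T M c k1 t x - backward_picard T M c k2 t x
           = integral {t..T} (\<lambda>s. \<Sum>y\<in>UNIV. M s x y * (k1 s y - k2 s y))"
proof -
  have "(\<lambda>s. \<Sum>y\<in>UNIV. M s x y * k s y) integrable_on {t..T}"
    if "\<And>y. continuous_on {0..T} (\<lambda>s. k s y)" for k
    by (rule integrable_on_subinterval[OF integrable_continuous_interval[OF backward_integrand_continuous[OF that]]])
       (use t in auto)
  then show ?thesis
    unfolding backward_picard_def
    by (simp add: integral_diff[symmetric] k1 k2 right_diff_distrib sum_subtractf)
qed

lemma backward_picard_dist:
  assumes k1: "\<And>y. continuous_on {0..T} (\<lambda>s. k1 s y)" and k2: "\<And>y. continuous_on {0..T} (\<lambda>s. k2 s y)"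
    and t: "t \<in> {0..T}"
    and close: "\<And>s y. s \<in> {t..T} \<Longrightarrow> \<bar>k1 s y - k2 s y\<bar> \<le> a * (T - s) ^ n / fact n"
  shows "\<bar>backward_picard T M c k1 t x - backward_picard T M c k2 t x\<bar>
           \<le> real CARD('x) * B * a * (T - t) ^ Suc n / fact (Suc n)"
proof -
  define K where "K = real CARD('x) * B * a / fact n"
  have int: "((\<lambda>s. K * (T - s) ^ n) has_integral K * ((T - t) ^ Suc n / real (Suc n))) {t..T}"
    using t by (intro has_integral_mult_right power_has_integral_backward) auto
  have "\<bar>integral {t..T} (\<lambda>s. \<Sum>y\<in>UNIV. M s x y * (k1 s y - k2 s y))\<bar>
          \<le> integral {t..T} (\<lambda>s. K * (T - s) ^ n)"
    unfolding real_norm_def[symmetric]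
  proof (rule integral_norm_bound_integral)
    show "(\<lambda>s. \<Sum>y\<in>UNIV. M s x y * (k1 s y - k2 s y)) integrable_on {t..T}"
      by (intro integrable_on_subinterval[OF integrable_continuous_interval] continuous_intros)
         (use t cont_M k1 k2 in auto)
    show "(\<lambda>s. K * (T - s) ^ n) integrable_on {t..T}" using int by blast
  next
    fix s assume s: "s \<in> {t..T}"
    then have "s \<in> {0..T}" using t by auto
    then have "\<bar>M s x y * (k1 s y - k2 s y)\<bar> \<le> B * (a * (T - s) ^ n / fact n)" for y
      unfolding abs_mult using bound_M[of s x y] bound_M[of s x x] close[OF s, of y]
      by (intro mult_mono) auto
    then have "norm (\<Sum>y\<in>UNIV. M s x y * (k1 s y - k2 s y)) \<le> real CARD('x) * (B * (a * (T - s) ^ n / fact n))"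
      unfolding real_norm_def by (intro abs_sum_le_card_mult) 
    then show "norm (\<Sum>y\<in>UNIV. M s x y * (k1 s y - k2 s y)) \<le> K * (T - s) ^ n"
      by (simp add: K_def)
  qed
  also have "\<dots> = real CARD('x) * B * a * (T - t) ^ Suc n / fact (Suc n)"
    using integral_unique[OF int] by (simp add: K_def field_simps del: of_nat_Suc)
  finally show ?thesis using backward_picard_diff[OF k1 k2 t] by simp
qed

lemma picard_iterate_continuous: "continuous_on {0..T} (\<lambda>t. picard_iterate T M c n t x)"
  by (induction n arbitrary: x) (simp_all add: picard_iterate_Suc backward_picard_continuous)

lemma picard_iterate_increment_bound:
  assumes "t \<in> {0..T}"
  shows "\<bar>picard_iterate T M c (Suc n) t x - picard_iterate T M c n t x\<bar>
           \<le> (\<Sum>y\<in>UNIV. \<bar>c y\<bar>) * (real CARD('x) * B) ^ n * (T - t) ^ n / fact n"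
  using assms
proof (induction n arbitrary: t x)
  case 0
  show ?case by (simp add: picard_iterate_Suc backward_picard_def) (intro member_le_sum; simp)
next
  case (Suc n)
  have "\<bar>backward_picard T M c (picard_iterate T M c (Suc n)) t x
           - backward_picard T M c (picard_iterate T M c n) t x\<bar>
          \<le> real CARD('x) * B * ((\<Sum>y\<in>UNIV. \<bar>c y\<bar>) * (real CARD('x) * B) ^ n) * (T - t) ^ Suc n / fact (Suc n)"
    by (rule backward_picard_dist[OF picard_iterate_continuous picard_iterate_continuous Suc.prems Suc.IH])
       (use Suc.prems in auto)
  then show ?case by (simp only: picard_iterate_Suc) (simp add: algebra_simps)
qed

lemma picard_iterate_increment_nonneg:
  assumes M_nonneg: "\<And>t x y. t \<in> {0..T} \<Longrightarrow> 0 \<le> M t x y" and c_nonneg: "\<And>x. 0 \<le> c x"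
    and t: "t \<in> {0..T}"
  shows "0 \<le> picard_iterate T M c (Suc n) t x - picard_iterate T M c n t x"
  using t
proof (induction n arbitrary: t x)
  case 0
  show ?case by (simp add: picard_iterate_Suc backward_picard_def c_nonneg)
next
  case (Suc n)
  have "0 \<le> integral {t..T} (\<lambda>s. \<Sum>y\<in>UNIV. M s x y *
             (picard_iterate T M c (Suc n) s y - picard_iterate T M c n s y))"
    by (intro integral_nonneg integrable_on_subinterval[OF integrable_continuous_interval]
              continuous_intros sum_nonneg mult_nonneg_nonneg)
       (use Suc M_nonneg cont_M picard_iterate_continuous in auto)
  moreover have "backward_picard T M c (picard_iterate T M c (Suc n)) t x
                   - backward_picard T M c (picard_iterate T M c n) t x
                 = integral {t..T} (\<lambda>s. \<Sum>y\<in>UNIV. M s x y *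
                     (picard_iterate T M c (Suc n) s y - picard_iterate T M c n s y))"
    by (rule backward_picard_diff[OF picard_iterate_continuous picard_iterate_continuous Suc.prems])
  ultimately show ?case by (simp only: picard_iterate_Suc)
qed

lemma picard_bound_nonneg: "0 \<le> T \<Longrightarrow> 0 \<le> B"
  using bound_M[of 0 undefined undefined] by (simp add: order_trans[OF abs_ge_zero])

lemma picard_iterate_telescope:
  "(\<Sum>i<n. picard_iterate T M c (Suc i) t x - picard_iterate T M c i t x) = picard_iterate T M c n t x"
  by (induction n) simp_all

lemma picard_iterate_uniform_limit:
  assumes "0 \<le> T"
  shows "uniform_limit {0..T} (\<lambda>n t. picard_iterate T M c n t x) (\<lambda>t. picard_limit T M c t x) sequentially"
proof -
  define E where "E = (\<Sum>y\<in>UNIV. \<bar>c y\<bar>)"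
  define L where "L = real CARD('x) * B"
  have "0 \<le> E" unfolding E_def by (simp add: sum_nonneg)
  have "0 \<le> L" using picard_bound_nonneg[OF assms] unfolding L_def by simp
  define m where "m i = E * (inverse (fact i) * (L * T) ^ i)" for i
  have "summable m" unfolding m_def by (intro summable_mult summable_exp)
  moreover have "norm (picard_iterate T M c (Suc i) t x - picard_iterate T M c i t x) \<le> m i"
    if t: "t \<in> {0..T}" for i t
  proof -
    have "E * L ^ i * (T - t) ^ i / fact i \<le> E * L ^ i * T ^ i / fact i"
      using t \<open>0 \<le> E\<close> \<open>0 \<le> L\<close>
      by (intro divide_right_mono mult_left_mono power_mono) auto
    then show ?thesis
      using picard_iterate_increment_bound[OF t, of i x]
      by (simp add: E_def L_def m_def power_mult_distrib field_simps)
  qed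
  ultimately have "uniform_limit {0..T}
      (\<lambda>n t. \<Sum>i<n. picard_iterate T M c (Suc i) t x - picard_iterate T M c i t x)
      (\<lambda>t. picard_limit T M c t x) sequentially"
    unfolding picard_limit_def by (intro Weierstrass_m_test) auto
  then show ?thesis by (simp only: picard_iterate_telescope)
qed

lemma picard_increments_sums:
  assumes "t \<in> {0..T}"
  shows "(\<lambda>n. picard_iterate T M c (Suc n) t x - picard_iterate T M c n t x) sums picard_limit T M c t x"
  unfolding sums_def picard_iterate_telescope
  using tendsto_uniform_limitI[OF picard_iterate_uniform_limit assms] assms by simp

lemma picard_limit_continuous:
  assumes "0 \<le> T"
  shows "continuous_on {0..T} (\<lambda>t. picard_limit T M c t x)"
  by (rule uniform_limit_theorem[OF _ picard_iterate_uniform_limit[OF assms]])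
     (simp_all add: picard_iterate_continuous)

lemma picard_limit_fixpoint:
  assumes t: "t \<in> {0..T}"
  shows "backward_picard T M c (picard_limit T M c) t x = picard_limit T M c t x"
proof -
  have "0 \<le> T" using t by simp
  have "(\<lambda>n. picard_iterate T M c (Suc n) t x) \<longlonglongrightarrow> picard_limit T M c t x"
    using tendsto_uniform_limitI[OF picard_iterate_uniform_limit[OF \<open>0 \<le> T\<close>] t] by (rule LIMSEQ_Suc)
  moreover have "(\<lambda>n. picard_iterate T M c (Suc n) t x) \<longlonglongrightarrow> backward_picard T M c (picard_limit T M c) t x"
  proof (rule LIMSEQ_I)
    fix e :: real assume "0 < e"
    define L where "L = real CARD('x) * B * T + 1"
    have "0 \<le> real CARD('x) * B * T" using picard_bound_nonneg \<open>0 \<le> T\<close> by simp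
    then have "0 < L" unfolding L_def by linarith
    then have "0 < e / L" using \<open>0 < e\<close> by simp
    have "\<forall>\<^sub>F n in sequentially. \<forall>y. \<forall>s\<in>{0..T}. dist (picard_iterate T M c n s y) (picard_limit T M c s y) < e / L"
      by (rule eventually_all_finite) (rule uniform_limitD[OF picard_iterate_uniform_limit[OF \<open>0 \<le> T\<close>] \<open>0 < e / L\<close>])
    then obtain N where N: "\<And>n s y. n \<ge> N \<Longrightarrow> s \<in> {0..T} \<Longrightarrow>
        \<bar>picard_iterate T M c n s y - picard_limit T M c s y\<bar> < e / L"
      unfolding eventually_sequentially dist_real_def by blast
    have "\<bar>picard_iterate T M c (Suc n) t x - backward_picard T M c (picard_limit T M c) t x\<bar> < e"
      if "n \<ge> N" for n
    proof -
      have "\<bar>picard_iterate T M c (Suc n) t x - backward_picard T M c (picard_limit T M c) t x\<bar>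
              \<le> real CARD('x) * B * (e / L) * (T - t) ^ Suc 0 / fact (Suc 0)"
        unfolding picard_iterate_Suc
        by (rule backward_picard_dist[OF picard_iterate_continuous picard_limit_continuous[OF \<open>0 \<le> T\<close>] t])
           (use N[OF that] t in \<open>auto simp: less_imp_le\<close>)
      also have "\<dots> = real CARD('x) * B * (e / L) * (T - t)" by simp
      also have "\<dots> \<le> real CARD('x) * B * (e / L) * T"
        using t \<open>0 < e / L\<close> picard_bound_nonneg by (intro mult_left_mono mult_nonneg_nonneg) auto
      also have "\<dots> = (L - 1) * (e / L)" by (simp add: L_def)
      also have "\<dots> < e" using \<open>0 < L\<close> \<open>0 < e\<close> by (simp add: field_simps)
      finally show ?thesis .
    qed
    then show "\<exists>N. \<forall>n\<ge>N. norm (picard_iterate T M c (Suc n) t x - backward_picard T M c (picard_limit T M c) t x) < e"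
      by auto
  qed
  ultimately show ?thesis by (rule LIMSEQ_unique[symmetric])
qed

end

lemma backward_linear_ode_positive_solution:
  fixes M :: "real \<Rightarrow> 'x::finite \<Rightarrow> 'x \<Rightarrow> real" and c :: "'x \<Rightarrow> real"
  assumes T: "0 \<le> T" and cont_M: "\<And>x y. continuous_on {0..T} (\<lambda>t. M t x y)"
    and M_nonneg: "\<And>t x y. t \<in> {0..T} \<Longrightarrow> 0 \<le> M t x y" and c_pos: "\<And>x. 0 < c x"
  obtains k where "\<And>x. k T x = c x" and "\<And>t x. t \<in> {0..T} \<Longrightarrow> 0 < k t x"
    and "\<And>t x. t \<in> {0..T} \<Longrightarrow>
           ((\<lambda>s. k s x) has_real_derivative - (\<Sum>y\<in>UNIV. M t x y * k t y)) (at t within {0..T})"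
proof -
  obtain B where bound: "\<And>t x y. t \<in> {0..T} \<Longrightarrow> \<bar>M t x y\<bar> \<le> B"
    using continuous_on_entries_bounded cont_M by metis
  define k where "k = picard_limit T M c"
  have fixpoint: "backward_picard T M c k t x = k t x" if "t \<in> {0..T}" for t x
    unfolding k_def by (rule picard_limit_fixpoint[where B = B]) (use cont_M bound that in auto)
  have cont_k: "continuous_on {0..T} (\<lambda>s. k s y)" for y
    unfolding k_def by (rule picard_limit_continuous[where B = B]) (use cont_M bound T in auto)
  show thesis
  proof (rule that)
    show "k T x = c x" for x
      using fixpoint[of T x] T by (simp add: backward_picard_def)
  next
    fix t x assume t: "t \<in> {0..T}"
    have "(if n = 0 then c x else 0) \<le> picard_iterate T M c (Suc n) t x - picard_iterate T M c n t x" for n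
    proof -
      have "0 \<le> picard_iterate T M c (Suc n) t x - picard_iterate T M c n t x"
        by (rule picard_iterate_increment_nonneg[where B = B])
           (use cont_M bound M_nonneg c_pos t in \<open>auto simp: less_imp_le\<close>)
      then show ?thesis by (simp add: picard_iterate_Suc backward_picard_def)
    qed
    moreover have "(\<lambda>n. if n = 0 then c x else 0) sums c x" using sums_single[of 0 "\<lambda>_. c x"] by simp
    moreover have "(\<lambda>n. picard_iterate T M c (Suc n) t x - picard_iterate T M c n t x) sums k t x"
      unfolding k_def by (rule picard_increments_sums[where B = B]) (use cont_M bound t in auto)
    ultimately have "c x \<le> k t x" by (rule sums_le)
    then show "0 < k t x" using c_pos[of x] by simp
  next
    fix t x assume t: "t \<in> {0..T}"
    have "((\<lambda>s. backward_picard T M c k s x) has_real_derivative - (\<Sum>y\<in>UNIV. M t x y * k t y))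
            (at t within {0..T})"
      by (rule backward_picard_has_derivative[where B = B]) (use cont_M bound t cont_k in auto)
    then show "((\<lambda>s. k s x) has_real_derivative - (\<Sum>y\<in>UNIV. M t x y * k t y)) (at t within {0..T})"
      by (rule has_field_derivative_transform_within[where d = 1]) (use t fixpoint in auto)
  qed
qed

definition backward_sol :: "real \<Rightarrow> (real \<Rightarrow> 'x::finite \<Rightarrow> 'x \<Rightarrow> real) \<Rightarrow> (real \<Rightarrow> 'x \<Rightarrow> real) \<Rightarrow> bool"
  where "backward_sol T Q h \<longleftrightarrow>
    (\<forall>t\<in>{0..T}. \<forall>x. ((\<lambda>s. h s x) has_real_derivative - (\<Sum>y\<in>UNIV - {x}. Q t x y * (h t y - h t x)))
        (at t within {0..T}))"

lemma backward_solD: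
  "backward_sol T Q h \<Longrightarrow> t \<in> {0..T} \<Longrightarrow>
    ((\<lambda>s. h s x) has_real_derivative - (\<Sum>y\<in>UNIV - {x}. Q t x y * (h t y - h t x))) (at t within {0..T})"
  unfolding backward_sol_def by blast

lemma backward_sol_continuous: "backward_sol T Q h \<Longrightarrow> continuous_on {0..T} (\<lambda>t. h t x)"
  unfolding backward_sol_def by (intro DERIV_continuous_on) blast

lemma backward_sol_exists:
  assumes gen: "is_generator T Q" and T: "0 \<le> T" and f_pos: "\<And>x. 0 < f x"
  obtains h where "\<And>x. h T x = f x" and "\<And>t x. t \<in> {0..T} \<Longrightarrow> 0 < h t x" and "backward_sol T Q h"
proof -
  obtain B where B: "\<And>t x y. t \<in> {0..T} \<Longrightarrow> \<bar>Q t x y\<bar> \<le> B"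
    by (rule continuous_on_entries_bounded[where M = Q]) (use is_generator_continuous[OF gen] in auto)
  \<comment> \<open>Shifting the diagonal by B makes all rates nonnegative, so the Picard iterates increase;
    the factor exp (- B (T - t)) undoes the shift.\<close>
  define M where "M t x y = Q t x y + (if x = y then B else 0)" for t x y
  have cont_M: "continuous_on {0..T} (\<lambda>t. M t x y)" for x y
    unfolding M_def by (intro continuous_intros is_generator_continuous[OF gen])
  have M_nonneg: "0 \<le> M t x y" if "t \<in> {0..T}" for t x y
    using B[OF that, of x y] is_generator_offdiag_nonneg[OF gen that, of x y] by (auto simp: M_def)
  obtain k where kT: "\<And>x. k T x = f x" and k_pos: "\<And>t x. t \<in> {0..T} \<Longrightarrow> 0 < k t x"
    and k_deriv: "\<And>t x. t \<in> {0..T} \<Longrightarrow>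
           ((\<lambda>s. k s x) has_real_derivative - (\<Sum>y\<in>UNIV. M t x y * k t y)) (at t within {0..T})"
    by (rule backward_linear_ode_positive_solution[where M = M and c = f])
       (use T cont_M M_nonneg f_pos in auto)
  define h where "h t x = exp (- (B * (T - t))) * k t x" for t x
  show thesis
  proof (rule that)
    show "h T x = f x" for x by (simp add: h_def kT)
    show "0 < h t x" if "t \<in> {0..T}" for t x using k_pos[OF that] by (simp add: h_def)
    show "backward_sol T Q h"
      unfolding backward_sol_def
    proof (intro ballI allI)
      fix t x assume t: "t \<in> {0..T}"
      have "(\<Sum>y\<in>UNIV. M t x y * k t y) = (\<Sum>y\<in>UNIV. Q t x y * k t y) + B * k t x"
        by (simp add: M_def distrib_right sum.distrib if_distrib[of "\<lambda>z. z * _"] cong: if_cong)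
      then have "((\<lambda>s. h s x) has_real_derivative - (\<Sum>y\<in>UNIV. Q t x y * h t y)) (at t within {0..T})"
        unfolding h_def using k_deriv[OF t]
        by (auto intro!: derivative_eq_intros simp: sum_distrib_left algebra_simps)
      then show "((\<lambda>s. h s x) has_real_derivative - (\<Sum>y\<in>UNIV - {x}. Q t x y * (h t y - h t x)))
                   (at t within {0..T})"
        by (simp only: backward_rhs_eq[OF gen t])
    qed
  qed
qed

section \<open>Duality between the path divergence and the backward equation\<close>

lemma forward_backward_pairing:
  assumes fwd: "forward_sol T Q p0 p" and bwd: "backward_sol T Q h" and T: "0 \<le> T"
  shows "(\<Sum>x\<in>UNIV. p T x * h T x) = (\<Sum>x\<in>UNIV. p0 x * h 0 x)"
proof -
  have "((\<lambda>s. \<Sum>x\<in>UNIV. p s x * h s x) has_real_derivative 0) (at t within {0..T})"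
    if t: "t \<in> {0..T}" for t
  proof -
    define A where "A x = (\<Sum>y\<in>UNIV - {x}. Q t y x * p t y) - (\<Sum>y\<in>UNIV - {x}. Q t x y * p t x)" for x
    define H where "H x = - (\<Sum>y\<in>UNIV - {x}. Q t x y * (h t y - h t x))" for x
    have "((\<lambda>s. \<Sum>x\<in>UNIV. p s x * h s x) has_real_derivative (\<Sum>x\<in>UNIV. A x * h t x + H x * p t x))
            (at t within {0..T})"
      using fwd t backward_solD[OF bwd t] unfolding forward_sol_def A_def H_def
      by (intro DERIV_sum DERIV_mult) auto
    moreover have "(\<Sum>x\<in>UNIV. A x * h t x + H x * p t x)
        = (\<Sum>x\<in>UNIV. \<Sum>y\<in>UNIV - {x}. Q t y x * p t y * h t x) - (\<Sum>x\<in>UNIV. \<Sum>y\<in>UNIV - {x}. Q t x y * p t x * h t y)"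
      unfolding A_def H_def
      by (simp add: sum.distrib sum_subtractf left_diff_distrib right_diff_distrib sum_distrib_right
                    sum_distrib_left algebra_simps)
    moreover have "(\<Sum>x\<in>UNIV. \<Sum>y\<in>UNIV - {x}. Q t y x * p t y * h t x)
                 = (\<Sum>x\<in>UNIV. \<Sum>y\<in>UNIV - {x}. Q t x y * p t x * h t y)"
      by (rule sum_offdiag_swap)
    ultimately show ?thesis by simp
  qed
  then have "\<exists>C. \<forall>s\<in>{0..T}. (\<Sum>x\<in>UNIV. p s x * h s x) = C"
    by (intro has_field_derivative_zero_constant) auto
  then show ?thesis using T fwd unfolding forward_sol_def by auto
qed

lemma log_pairing_has_derivative:
  assumes fwd: "forward_sol T Q p0 p" and bwd: "backward_sol T Qpre h"
    and h_pos: "\<And>x. 0 < h t x" and t: "t \<in> {0..T}"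
  shows "((\<lambda>s. \<Sum>x\<in>UNIV. p s x * ln (h s x)) has_real_derivative
     (\<Sum>x\<in>UNIV. p t x * (\<Sum>y\<in>UNIV - {x}. Q t x y * ln (h t y / h t x) - Qpre t x y * (h t y / h t x - 1))))
     (at t within {0..T})"
proof -
  define A where "A x = (\<Sum>y\<in>UNIV - {x}. Q t y x * p t y) - (\<Sum>y\<in>UNIV - {x}. Q t x y * p t x)" for x
  define H where "H x = - (\<Sum>y\<in>UNIV - {x}. Qpre t x y * (h t y - h t x))" for x
  define l where "l y = ln (h t y)" for y
  have deriv: "((\<lambda>s. \<Sum>x\<in>UNIV. p s x * ln (h s x)) has_real_derivative
      (\<Sum>x\<in>UNIV. A x * l x + 1 / h t x * H x * p t x)) (at t within {0..T})"
    using fwd t backward_solD[OF bwd t] h_pos unfolding forward_sol_def A_def H_def l_def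
    by (intro DERIV_sum DERIV_mult DERIV_chain2[OF DERIV_ln_divide]) auto
  have "(\<Sum>x\<in>UNIV. A x * l x) = (\<Sum>x\<in>UNIV. \<Sum>y\<in>UNIV - {x}. p t x * (Q t x y * (l y - l x)))"
  proof -
    have "(\<Sum>x\<in>UNIV. \<Sum>y\<in>UNIV - {x}. Q t y x * p t y * l x) = (\<Sum>x\<in>UNIV. \<Sum>y\<in>UNIV - {x}. Q t x y * p t x * l y)"
      by (rule sum_offdiag_swap)
    moreover have "(\<Sum>x\<in>UNIV. A x * l x) = (\<Sum>x\<in>UNIV. \<Sum>y\<in>UNIV - {x}. Q t y x * p t y * l x)
                   - (\<Sum>x\<in>UNIV. \<Sum>y\<in>UNIV - {x}. Q t x y * p t x * l x)"
      unfolding A_def by (simp add: sum_subtractf left_diff_distrib sum_distrib_right)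
    ultimately show ?thesis by (simp add: sum_subtractf[symmetric] algebra_simps)
  qed
  moreover have "1 / h t x * H x * p t x = - (\<Sum>y\<in>UNIV - {x}. p t x * (Qpre t x y * (h t y / h t x - 1)))" for x
    using h_pos[of x] unfolding H_def
    by (simp add: sum_distrib_left sum_divide_distrib[symmetric] algebra_simps)
  moreover have "ln (h t y / h t x) = l y - l x" for x y
    unfolding l_def using h_pos[of x] h_pos[of y] by (simp add: ln_div)
  ultimately have "(\<Sum>x\<in>UNIV. A x * l x + 1 / h t x * H x * p t x)
      = (\<Sum>x\<in>UNIV. p t x * (\<Sum>y\<in>UNIV - {x}. Q t x y * ln (h t y / h t x) - Qpre t x y * (h t y / h t x - 1)))"
    by (simp add: sum.distrib sum_subtractf right_diff_distrib sum_distrib_left sum_negf[symmetric])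
  then show ?thesis using deriv by simp
qed

lemma log_pairing_has_integral:
  assumes fwd: "forward_sol T Q p0 p" and bwd: "backward_sol T Qpre h"
    and h_pos: "\<And>t x. t \<in> {0..T} \<Longrightarrow> 0 < h t x" and T: "0 \<le> T"
  shows "((\<lambda>t. \<Sum>x\<in>UNIV. p t x * (\<Sum>y\<in>UNIV - {x}. Q t x y * ln (h t y / h t x) - Qpre t x y * (h t y / h t x - 1)))
          has_integral (\<Sum>x\<in>UNIV. p T x * ln (h T x)) - (\<Sum>x\<in>UNIV. p 0 x * ln (h 0 x))) {0..T}"
  using log_pairing_has_derivative[OF fwd bwd h_pos]
  by (intro fundamental_theorem_of_calculus[OF T]) (auto simp: has_real_derivative_iff_has_vector_derivative)

lemma log_pairing_rate_continuous:
  assumes gen: "is_generator T Q" and gen_pre: "is_generator T Qpre"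
    and fwd: "forward_sol T Q p0 p" and bwd: "backward_sol T Qpre h"
    and h_pos: "\<And>t x. t \<in> {0..T} \<Longrightarrow> 0 < h t x"
  shows "continuous_on {0..T}
    (\<lambda>t. \<Sum>x\<in>UNIV. p t x * (\<Sum>y\<in>UNIV - {x}. Q t x y * ln (h t y / h t x) - Qpre t x y * (h t y / h t x - 1)))"
proof -
  have h_nz: "h t x \<noteq> 0" if "0 \<le> t" "t \<le> T" for t x using h_pos[of t x] that by simp
  show ?thesis
    by (intro continuous_intros forward_sol_continuous[OF fwd] backward_sol_continuous[OF bwd]
              is_generator_continuous[OF gen] is_generator_continuous[OF gen_pre])
       (use h_nz h_pos in \<open>auto simp: divide_pos_pos\<close>)
qed

lemma nn_integral_interval_eq_integral:
  fixes f :: "real \<Rightarrow> real"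
  assumes "continuous_on {0..T} f" and "\<And>t. t \<in> {0..T} \<Longrightarrow> 0 \<le> f t" and "(f has_integral I) {0..T}"
  shows "(\<integral>\<^sup>+ t\<in>{0..T}. ennreal (f t) \<partial>lborel) = ennreal I"
proof -
  define g where "g t = indicator {0..T} t * f t" for t
  have "integral\<^sup>N lborel g = I"
  proof (rule nn_integral_has_integral_lborel)
    show "g \<in> borel_measurable borel"
      unfolding g_def using borel_measurable_continuous_on_indicator[OF _ assms(1)] by simp
    show "0 \<le> g t" for t unfolding g_def using assms(2) by (auto simp: indicator_def)
    have "g = (\<lambda>t. if t \<in> {0..T} then f t else 0)" unfolding g_def by (auto simp: indicator_def)
    then show "(g has_integral I) UNIV" using assms(3) has_integral_restrict_UNIV by metis
  qed
  moreover have "ennreal (f t) * indicator {0..T} t = ennreal (g t)" for t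
    unfolding g_def by (auto simp: indicator_def)
  ultimately show ?thesis by simp
qed

lemma ennreal_integral_le_nn_integral:
  fixes f :: "real \<Rightarrow> real"
  assumes cont: "continuous_on {0..T} f" and int: "(f has_integral I) {0..T}"
  shows "ennreal I \<le> (\<integral>\<^sup>+ t\<in>{0..T}. ennreal (f t) \<partial>lborel)"
proof -
  have cont_pos: "continuous_on {0..T} (\<lambda>t. max (f t) 0)" by (intro continuous_intros cont)
  then obtain J where J: "((\<lambda>t. max (f t) 0) has_integral J) {0..T}"
    using integrable_continuous_interval by blast
  have "I \<le> J" by (rule has_integral_le[OF int J]) simp
  then have "ennreal I \<le> ennreal J" by (rule ennreal_leI)
  also have "\<dots> = (\<integral>\<^sup>+ t\<in>{0..T}. ennreal (max (f t) 0) \<partial>lborel)"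
    by (rule nn_integral_interval_eq_integral[OF cont_pos _ J, symmetric]) simp
  also have "\<dots> = (\<integral>\<^sup>+ t\<in>{0..T}. ennreal (f t) \<partial>lborel)"
    by (simp add: ennreal_max_0 max.commute)
  finally show ?thesis .
qed

lemma ennreal_sum_le_sum_ennreal:
  fixes f :: "'a \<Rightarrow> real"
  shows "ennreal (\<Sum>i\<in>A. f i) \<le> (\<Sum>i\<in>A. ennreal (f i))"
proof (induction A rule: infinite_finite_induct)
  case (insert x F)
  have "ennreal (f x + sum f F) \<le> ennreal (f x) + ennreal (sum f F)"
    by (auto simp: ennreal_plus_if intro: ennreal_leI)
  also have "\<dots> \<le> ennreal (f x) + (\<Sum>i\<in>F. ennreal (f i))"
    using insert.IH by (rule add_left_mono)
  finally show ?case using insert by simp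
qed auto

text \<open>The rate kl_rate a b is the Legendre dual of u \<mapsto> b (u - 1) at ln u, the supremum
  being attained at u = a / b.\<close>
lemma kl_rate_ge_dual:
  assumes a: "0 \<le> a" and b: "0 \<le> b" and u: "0 < u"
  shows "ennreal (a * ln u - b * (u - 1)) \<le> kl_rate a b"
proof (cases "a = 0 \<or> b = 0")
  case True
  have "- (b * (u - 1)) \<le> b" using b u by (simp add: algebra_simps)
  then show ?thesis using True b unfolding kl_rate_def by auto
next
  case False
  then have "0 < a" "0 < b" using a b by auto
  have "ln (b * u / a) \<le> b * u / a - 1" using \<open>0 < a\<close> \<open>0 < b\<close> u by (intro ln_le_minus_one) simp
  then have "a * ln (b * u / a) \<le> b * u - a" using \<open>0 < a\<close> by (simp add: field_simps)
  moreover have "ln (b * u / a) = ln u - ln (a / b)" using \<open>0 < a\<close> \<open>0 < b\<close> u by (simp add: ln_div ln_mult)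
  ultimately have "a * ln u - b * (u - 1) \<le> b - a + a * ln (a / b)" by (simp add: algebra_simps)
  then show ?thesis using False unfolding kl_rate_def by (simp add: ennreal_leI)
qed

lemma kl_rate_eq_dual:
  assumes b: "0 \<le> b" and u: "0 < u"
  shows "kl_rate (b * u) b = ennreal (b * u * ln u - b * (u - 1))"
    and "0 \<le> b * u * ln u - b * (u - 1)"
proof -
  have "- ln u \<le> 1 / u - 1" using ln_le_minus_one[of "1 / u"] u by (simp add: ln_div)
  then have "0 \<le> u * ln u - u + 1" using u by (simp add: field_simps)
  then have "0 \<le> b * (u * ln u - u + 1)" using b by simp
  then show "0 \<le> b * u * ln u - b * (u - 1)" by (simp add: algebra_simps)
  show "kl_rate (b * u) b = ennreal (b * u * ln u - b * (u - 1))"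
    using u by (cases "b = 0") (simp_all add: kl_rate_def algebra_simps)
qed

lemma log_pairing_rate_le_kl:
  fixes p :: "'x::finite \<Rightarrow> real" and a b u :: "'x \<Rightarrow> 'x \<Rightarrow> real"
  assumes "\<And>x. 0 \<le> p x" "\<And>x y. x \<noteq> y \<Longrightarrow> 0 \<le> a x y" "\<And>x y. x \<noteq> y \<Longrightarrow> 0 \<le> b x y"
    and "\<And>x y. 0 < u x y"
  shows "ennreal (\<Sum>x\<in>UNIV. p x * (\<Sum>y\<in>UNIV - {x}. a x y * ln (u x y) - b x y * (u x y - 1)))
     \<le> (\<Sum>x\<in>UNIV. ennreal (p x) * (\<Sum>y\<in>UNIV - {x}. kl_rate (a x y) (b x y)))"
proof -
  have "ennreal (p x * (\<Sum>y\<in>UNIV - {x}. a x y * ln (u x y) - b x y * (u x y - 1)))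
        \<le> ennreal (p x) * (\<Sum>y\<in>UNIV - {x}. kl_rate (a x y) (b x y))" for x
  proof -
    have "ennreal (p x * (\<Sum>y\<in>UNIV - {x}. a x y * ln (u x y) - b x y * (u x y - 1)))
        = ennreal (p x) * ennreal (\<Sum>y\<in>UNIV - {x}. a x y * ln (u x y) - b x y * (u x y - 1))"
      using assms(1) by (simp add: ennreal_mult')
    also have "\<dots> \<le> ennreal (p x) * (\<Sum>y\<in>UNIV - {x}. ennreal (a x y * ln (u x y) - b x y * (u x y - 1)))"
      by (intro mult_left_mono ennreal_sum_le_sum_ennreal) simp
    also have "\<dots> \<le> ennreal (p x) * (\<Sum>y\<in>UNIV - {x}. kl_rate (a x y) (b x y))"
      by (intro mult_left_mono sum_mono kl_rate_ge_dual) (use assms in auto)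
    finally show ?thesis .
  qed
  then show ?thesis by (intro order_trans[OF ennreal_sum_le_sum_ennreal] sum_mono)
qed

lemma path_kl_ge_log_pairing:
  assumes T: "0 \<le> T" and gen_pre: "is_generator T Qpre" and gen: "is_generator T Q"
    and fwd: "forward_sol T Q p0 p" and p0: "\<And>x. 0 \<le> p0 x"
    and bwd: "backward_sol T Qpre h" and h_pos: "\<And>t x. t \<in> {0..T} \<Longrightarrow> 0 < h t x"
  shows "ennreal ((\<Sum>x\<in>UNIV. p T x * ln (h T x)) - (\<Sum>x\<in>UNIV. p 0 x * ln (h 0 x))) \<le> path_kl T Qpre Q p"
proof -
  have "ennreal ((\<Sum>x\<in>UNIV. p T x * ln (h T x)) - (\<Sum>x\<in>UNIV. p 0 x * ln (h 0 x)))
    \<le> (\<integral>\<^sup>+ t\<in>{0..T}. ennreal (\<Sum>x\<in>UNIV. p t x *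
          (\<Sum>y\<in>UNIV - {x}. Q t x y * ln (h t y / h t x) - Qpre t x y * (h t y / h t x - 1))) \<partial>lborel)"
    by (rule ennreal_integral_le_nn_integral[OF log_pairing_rate_continuous[OF gen gen_pre fwd bwd h_pos]
                                                log_pairing_has_integral[OF fwd bwd h_pos T]])
  also have "\<dots> \<le> path_kl T Qpre Q p"
    unfolding path_kl_def
  proof (intro nn_integral_mono)
    fix t
    show "ennreal (\<Sum>x\<in>UNIV. p t x *
            (\<Sum>y\<in>UNIV - {x}. Q t x y * ln (h t y / h t x) - Qpre t x y * (h t y / h t x - 1)))
            * indicator {0..T} t
          \<le> (\<Sum>x\<in>UNIV. ennreal (p t x) * (\<Sum>y\<in>UNIV - {x}. kl_rate (Q t x y) (Qpre t x y)))
            * indicator {0..T} t"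
    proof (cases "t \<in> {0..T}")
      case True
      then show ?thesis
        using log_pairing_rate_le_kl[where u = "\<lambda>x y. h t y / h t x"]
          forward_sol_nonneg[OF gen fwd p0 True] is_generator_offdiag_nonneg[OF gen True]
          is_generator_offdiag_nonneg[OF gen_pre True] h_pos[OF True]
        by simp
    qed simp
  qed
  finally show ?thesis .
qed

definition h_transform ::
  "(real \<Rightarrow> 'x::finite \<Rightarrow> 'x \<Rightarrow> real) \<Rightarrow> (real \<Rightarrow> 'x \<Rightarrow> real) \<Rightarrow> real \<Rightarrow> 'x \<Rightarrow> 'x \<Rightarrow> real"
  where "h_transform Q h t x y =
    (if y = x then - (\<Sum>z\<in>UNIV - {x}. Q t x z * h t z / h t x) else Q t x y * h t y / h t x)"

lemma h_transform_offdiag: "y \<noteq> x \<Longrightarrow> h_transform Q h t x y = Q t x y * (h t y / h t x)"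
  by (simp add: h_transform_def)

lemma h_transform_is_generator:
  fixes Q :: "real \<Rightarrow> 'x::finite \<Rightarrow> 'x \<Rightarrow> real"
  assumes gen: "is_generator T Q" and bwd: "backward_sol T Q h"
    and h_pos: "\<And>t x. t \<in> {0..T} \<Longrightarrow> 0 < h t x"
  shows "is_generator T (h_transform Q h)"
  unfolding is_generator_def
proof (intro conjI ballI allI impI)
  fix t and x y :: 'x assume t: "t \<in> {0..T}" and "x \<noteq> y"
  then show "0 \<le> h_transform Q h t x y"
    using is_generator_offdiag_nonneg[OF gen t] h_pos[OF t] by (simp add: h_transform_def less_imp_le)
next
  fix t and x :: 'x
  show "h_transform Q h t x x = - (\<Sum>y\<in>UNIV - {x}. h_transform Q h t x y)"
    by (simp add: h_transform_def)
next
  fix x y :: 'x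
  have h_nz: "h t x \<noteq> 0" if "0 \<le> t" "t \<le> T" for t using h_pos[of t x] that by simp
  show "continuous_on {0..T} (\<lambda>t. h_transform Q h t x y)"
    unfolding h_transform_def
    by (cases "y = x"; simp; intro continuous_intros backward_sol_continuous[OF bwd] is_generator_continuous[OF gen])
       (use h_nz in auto)
qed

lemma forward_sol_h_transform:
  assumes fwd: "forward_sol T Q p0 p" and bwd: "backward_sol T Q h"
    and h_pos: "\<And>t x. t \<in> {0..T} \<Longrightarrow> 0 < h t x"
  shows "forward_sol T (h_transform Q h) (\<lambda>x. p0 x * h 0 x / Z) (\<lambda>t x. p t x * h t x / Z)"
  unfolding forward_sol_def
proof (intro conjI ballI allI)
  show "(\<lambda>x. p 0 x * h 0 x / Z) = (\<lambda>x. p0 x * h 0 x / Z)" using fwd by (simp add: forward_sol_def)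
next
  fix t x assume t: "t \<in> {0..T}"
  define A where "A = (\<Sum>y\<in>UNIV - {x}. Q t y x * p t y) - (\<Sum>y\<in>UNIV - {x}. Q t x y * p t x)"
  define H where "H = - (\<Sum>y\<in>UNIV - {x}. Q t x y * (h t y - h t x))"
  have h_nz: "h t y \<noteq> 0" for y using h_pos[OF t, of y] by simp
  have "((\<lambda>s. p s x * h s x / Z) has_real_derivative (A * h t x + H * p t x) / Z) (at t within {0..T})"
    using fwd t backward_solD[OF bwd t] unfolding forward_sol_def A_def H_def
    by (intro DERIV_cdivide DERIV_mult) auto
  moreover have "(\<Sum>y\<in>UNIV - {x}. h_transform Q h t y x * (p t y * h t y / Z))
                 = (\<Sum>y\<in>UNIV - {x}. Q t y x * p t y) * h t x / Z"
    unfolding sum_distrib_right sum_divide_distrib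
    using h_nz by (intro sum.cong) (auto simp: h_transform_def field_simps)
  moreover have "(\<Sum>y\<in>UNIV - {x}. h_transform Q h t x y * (p t x * h t x / Z))
                 = (\<Sum>y\<in>UNIV - {x}. Q t x y * h t y) * p t x / Z"
    unfolding sum_distrib_right sum_divide_distrib
    using h_nz by (intro sum.cong) (auto simp: h_transform_def field_simps)
  moreover have "(A * h t x + H * p t x) / Z
      = (\<Sum>y\<in>UNIV - {x}. Q t y x * p t y) * h t x / Z - (\<Sum>y\<in>UNIV - {x}. Q t x y * h t y) * p t x / Z"
    unfolding A_def H_def
    by (simp add: sum_subtractf right_diff_distrib sum_distrib_right sum_distrib_left algebra_simps
                  diff_divide_distrib add_divide_distrib)
  ultimately show "((\<lambda>s. p s x * h s x / Z) has_real_derivative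
      (\<Sum>y\<in>UNIV - {x}. h_transform Q h t y x * (p t y * h t y / Z))
      - (\<Sum>y\<in>UNIV - {x}. h_transform Q h t x y * (p t x * h t x / Z))) (at t within {0..T})"
    by simp
qed

lemma kl_integrand_h_transform:
  fixes Q :: "real \<Rightarrow> 'x::finite \<Rightarrow> 'x \<Rightarrow> real"
  assumes gen: "is_generator T Q" and t: "t \<in> {0..T}"
    and h_pos: "\<And>x. 0 < h t x" and q: "\<And>x. 0 \<le> q x"
  defines "R \<equiv> \<Sum>x\<in>UNIV. q x * (\<Sum>y\<in>UNIV - {x}.
             h_transform Q h t x y * ln (h t y / h t x) - Q t x y * (h t y / h t x - 1))"
  shows "(\<Sum>x\<in>UNIV. ennreal (q x) * (\<Sum>y\<in>UNIV - {x}. kl_rate (h_transform Q h t x y) (Q t x y)))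
           = ennreal R"
    and "0 \<le> R"
proof -
  define r where "r x y = h_transform Q h t x y * ln (h t y / h t x) - Q t x y * (h t y / h t x - 1)" for x y
  have rate: "kl_rate (h_transform Q h t x y) (Q t x y) = ennreal (r x y) \<and> 0 \<le> r x y"
    if "y \<in> UNIV - {x}" for x y
  proof -
    have u: "0 < h t y / h t x" using h_pos by simp
    have b: "0 \<le> Q t x y" using is_generator_offdiag_nonneg[OF gen t] that by auto
    have "h_transform Q h t x y = Q t x y * (h t y / h t x)" using that by (simp add: h_transform_offdiag)
    then show ?thesis unfolding r_def using kl_rate_eq_dual[OF b u] by simp
  qed
  show "0 \<le> R" unfolding R_def r_def[symmetric]
    using rate q by (intro sum_nonneg mult_nonneg_nonneg) auto
  have "(\<Sum>y\<in>UNIV - {x}. kl_rate (h_transform Q h t x y) (Q t x y)) = ennreal (\<Sum>y\<in>UNIV - {x}. r x y)" for x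
  proof -
    have "(\<Sum>y\<in>UNIV - {x}. kl_rate (h_transform Q h t x y) (Q t x y)) = (\<Sum>y\<in>UNIV - {x}. ennreal (r x y))"
      using rate by (intro sum.cong) auto
    also have "\<dots> = ennreal (\<Sum>y\<in>UNIV - {x}. r x y)"
      using rate by (intro sum_ennreal) auto
    finally show ?thesis .
  qed
  then have "(\<Sum>x\<in>UNIV. ennreal (q x) * (\<Sum>y\<in>UNIV - {x}. kl_rate (h_transform Q h t x y) (Q t x y)))
      = (\<Sum>x\<in>UNIV. ennreal (q x * (\<Sum>y\<in>UNIV - {x}. r x y)))"
    using q by (simp add: ennreal_mult')
  also have "\<dots> = ennreal R"
    unfolding R_def r_def[symmetric] using rate q
    by (intro sum_ennreal mult_nonneg_nonneg sum_nonneg) auto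
  finally show "(\<Sum>x\<in>UNIV. ennreal (q x) * (\<Sum>y\<in>UNIV - {x}. kl_rate (h_transform Q h t x y) (Q t x y)))
           = ennreal R" .
qed

lemma path_kl_h_transform:
  fixes Q :: "real \<Rightarrow> 'x::finite \<Rightarrow> 'x \<Rightarrow> real"
  assumes T: "0 \<le> T" and gen: "is_generator T Q" and bwd: "backward_sol T Q h"
    and h_pos: "\<And>t x. t \<in> {0..T} \<Longrightarrow> 0 < h t x"
    and fwd: "forward_sol T (h_transform Q h) q0 q" and q0: "\<And>x. 0 \<le> q0 x"
  shows "path_kl T Q (h_transform Q h) q
           = ennreal ((\<Sum>x\<in>UNIV. q T x * ln (h T x)) - (\<Sum>x\<in>UNIV. q 0 x * ln (h 0 x)))"
    and "0 \<le> (\<Sum>x\<in>UNIV. q T x * ln (h T x)) - (\<Sum>x\<in>UNIV. q 0 x * ln (h 0 x))"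
proof -
  define F' where "F' t = (\<Sum>x\<in>UNIV. q t x * (\<Sum>y\<in>UNIV - {x}.
      h_transform Q h t x y * ln (h t y / h t x) - Q t x y * (h t y / h t x - 1)))" for t
  have gen_h: "is_generator T (h_transform Q h)" by (rule h_transform_is_generator[OF gen bwd h_pos])
  have q_nonneg: "0 \<le> q t x" if "t \<in> {0..T}" for t x by (rule forward_sol_nonneg[OF gen_h fwd q0 that])
  have integrand:
    "(\<Sum>x\<in>UNIV. ennreal (q t x) * (\<Sum>y\<in>UNIV - {x}. kl_rate (h_transform Q h t x y) (Q t x y))) = ennreal (F' t)"
    "0 \<le> F' t" if "t \<in> {0..T}" for t
    unfolding F'_def
    by (rule kl_integrand_h_transform[where h = h and q = "q t", OF gen that h_pos[OF that] q_nonneg[OF that]])+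
  have int: "(F' has_integral (\<Sum>x\<in>UNIV. q T x * ln (h T x)) - (\<Sum>x\<in>UNIV. q 0 x * ln (h 0 x))) {0..T}"
    unfolding F'_def by (rule log_pairing_has_integral[OF fwd bwd h_pos T])
  have "path_kl T Q (h_transform Q h) q = (\<integral>\<^sup>+ t\<in>{0..T}. ennreal (F' t) \<partial>lborel)"
    unfolding path_kl_def using integrand(1) by (intro nn_integral_cong) (auto simp: indicator_def)
  also have "\<dots> = ennreal ((\<Sum>x\<in>UNIV. q T x * ln (h T x)) - (\<Sum>x\<in>UNIV. q 0 x * ln (h 0 x)))"
    using log_pairing_rate_continuous[OF gen_h gen fwd bwd h_pos, folded F'_def] integrand(2) int
    by (rule nn_integral_interval_eq_integral)
  finally show "path_kl T Q (h_transform Q h) q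
           = ennreal ((\<Sum>x\<in>UNIV. q T x * ln (h T x)) - (\<Sum>x\<in>UNIV. q 0 x * ln (h 0 x)))" .
  show "0 \<le> (\<Sum>x\<in>UNIV. q T x * ln (h T x)) - (\<Sum>x\<in>UNIV. q 0 x * ln (h 0 x))"
    using int integrand(2) by (rule has_integral_nonneg)
qed

section \<open>The optimal terminal law\<close>

lemma sum_dirac:
  fixes x0 :: "'x::finite"
  shows "(\<Sum>x\<in>UNIV. dirac x0 x * f x) = f x0"
proof -
  have "(\<Sum>x\<in>UNIV. dirac x0 x * f x) = (\<Sum>x\<in>UNIV. if x = x0 then f x else 0)"
    by (intro sum.cong) (auto simp: dirac_def)
  then show ?thesis by simp
qed

lemma dirac_nonneg: "0 \<le> dirac x0 x"
  by (simp add: dirac_def)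

lemma exp_moment_backward_sol:
  fixes Qpre :: "real \<Rightarrow> 'x::finite \<Rightarrow> 'x \<Rightarrow> real"
  assumes T: "0 \<le> T" and gen_pre: "is_generator T Qpre"
    and fwd_pre: "forward_sol T Qpre (dirac x0) ppre"
  obtains h where "backward_sol T Qpre h" and "\<And>t x. t \<in> {0..T} \<Longrightarrow> 0 < h t x"
    and "\<And>x. h T x = exp (g x)" and "h 0 x0 = (\<Sum>x\<in>UNIV. ppre T x * exp (g x))"
proof -
  obtain h where hT: "\<And>x. h T x = exp (g x)" and h_pos: "\<And>t x. t \<in> {0..T} \<Longrightarrow> 0 < h t x"
    and bwd: "backward_sol T Qpre h"
    by (rule backward_sol_exists[OF gen_pre T, where f = "\<lambda>x. exp (g x)"]) auto
  have "(\<Sum>x\<in>UNIV. ppre T x * exp (g x)) = (\<Sum>x\<in>UNIV. dirac x0 x * h 0 x)"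
    using forward_backward_pairing[OF fwd_pre bwd T] by (simp add: hT)
  then show thesis using that[OF bwd h_pos hT] by (simp add: sum_dirac)
qed

lemma log_exp_moment_le_path_kl:
  fixes Qpre Q :: "real \<Rightarrow> 'x::finite \<Rightarrow> 'x \<Rightarrow> real"
  assumes T: "0 \<le> T" and gen_pre: "is_generator T Qpre"
    and fwd_pre: "forward_sol T Qpre (dirac x0) ppre"
    and gen: "is_generator T Q" and fwd: "forward_sol T Q (dirac x0) p"
  shows "ennreal ((\<Sum>x\<in>UNIV. p T x * g x) - ln (\<Sum>x\<in>UNIV. ppre T x * exp (g x))) \<le> path_kl T Qpre Q p"
proof -
  obtain h where bwd: "backward_sol T Qpre h" and h_pos: "\<And>t x. t \<in> {0..T} \<Longrightarrow> 0 < h t x"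
    and hT: "\<And>x. h T x = exp (g x)" and h0: "h 0 x0 = (\<Sum>x\<in>UNIV. ppre T x * exp (g x))"
    by (rule exp_moment_backward_sol[OF T gen_pre fwd_pre, where g = g]) blast
  have "p 0 = dirac x0" using fwd by (simp add: forward_sol_def)
  then show ?thesis
    using path_kl_ge_log_pairing[OF T gen_pre gen fwd dirac_nonneg bwd h_pos]
    by (simp add: hT h0 sum_dirac)
qed

lemma log_exp_moment_attained:
  fixes Qpre :: "real \<Rightarrow> 'x::finite \<Rightarrow> 'x \<Rightarrow> real"
  assumes T: "0 \<le> T" and gen_pre: "is_generator T Qpre"
    and fwd_pre: "forward_sol T Qpre (dirac x0) ppre"
  obtains Q p where "is_generator T Q" and "forward_sol T Q (dirac x0) p"
    and "path_kl T Qpre Q p = ennreal ((\<Sum>x\<in>UNIV. p T x * g x) - ln (\<Sum>x\<in>UNIV. ppre T x * exp (g x)))"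
    and "0 \<le> (\<Sum>x\<in>UNIV. p T x * g x) - ln (\<Sum>x\<in>UNIV. ppre T x * exp (g x))"
proof -
  obtain h where bwd: "backward_sol T Qpre h" and h_pos: "\<And>t x. t \<in> {0..T} \<Longrightarrow> 0 < h t x"
    and hT: "\<And>x. h T x = exp (g x)" and h0: "h 0 x0 = (\<Sum>x\<in>UNIV. ppre T x * exp (g x))"
    by (rule exp_moment_backward_sol[OF T gen_pre fwd_pre, where g = g]) blast
  define p where "p t x = ppre t x * h t x / h 0 x0" for t x
  have "0 < h 0 x0" using h_pos T by simp
  then have "(\<lambda>x. dirac x0 x * h 0 x / h 0 x0) = dirac x0" by (auto simp: dirac_def)
  then have fwd: "forward_sol T (h_transform Qpre h) (dirac x0) p"
    using forward_sol_h_transform[OF fwd_pre bwd h_pos, of "h 0 x0"] unfolding p_def by simp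
  have "p 0 = dirac x0" using fwd by (simp add: forward_sol_def)
  then show thesis
    using that[OF h_transform_is_generator[OF gen_pre bwd h_pos] fwd]
      path_kl_h_transform[OF T gen_pre bwd h_pos fwd dirac_nonneg]
    by (simp add: hT h0 sum_dirac)
qed

text \<open>Perturbing g0 in a single coordinate x by s gives a function of s that is maximal at
  s = 0; its derivative there is q x - w x exp (g0 x) / Z.\<close>
lemma log_sum_exp_maximizer:
  fixes q w g0 :: "'x::finite \<Rightarrow> real"
  assumes Z_pos: "0 < (\<Sum>y\<in>UNIV. w y * exp (g0 y))"
    and max: "\<And>g. (\<Sum>y\<in>UNIV. q y * g y) - ln (\<Sum>y\<in>UNIV. w y * exp (g y))
                   \<le> (\<Sum>y\<in>UNIV. q y * g0 y) - ln (\<Sum>y\<in>UNIV. w y * exp (g0 y))"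
  shows "q x = w x * exp (g0 x) / (\<Sum>y\<in>UNIV. w y * exp (g0 y))"
proof -
  define Z where "Z = (\<Sum>y\<in>UNIV. w y * exp (g0 y))"
  define c where "c = w x * exp (g0 x)"
  define \<psi> where "\<psi> s = s * q x + (\<Sum>y\<in>UNIV. q y * g0 y) - ln (Z + c * (exp s - 1))" for s
  have "\<psi> s \<le> \<psi> 0" for s
  proof -
    define g where "g y = g0 y + (if y = x then s else 0)" for y
    have "(\<Sum>y\<in>UNIV. q y * g y) = s * q x + (\<Sum>y\<in>UNIV. q y * g0 y)"
      by (simp add: g_def distrib_left sum.distrib if_distrib[of "(*) _"] cong: if_cong)
    moreover have "(\<Sum>y\<in>UNIV. w y * exp (g y)) = Z + c * (exp s - 1)"
    proof -
      have "(\<Sum>y\<in>UNIV. w y * exp (g y)) = w x * exp (g x) + (\<Sum>y\<in>UNIV - {x}. w y * exp (g0 y))"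
        unfolding sum_split_diag[of _ x] by (simp add: g_def)
      moreover have "Z = c + (\<Sum>y\<in>UNIV - {x}. w y * exp (g0 y))"
        unfolding Z_def c_def sum_split_diag[of _ x] ..
      ultimately show ?thesis by (simp add: g_def c_def exp_add algebra_simps)
    qed
    ultimately show ?thesis using max[of g] by (simp add: \<psi>_def Z_def)
  qed
  moreover have "DERIV \<psi> 0 :> q x - c * exp 0 / (Z + c * (exp 0 - 1))"
    unfolding \<psi>_def using Z_pos unfolding Z_def[symmetric]
    by (auto intro!: derivative_eq_intros)
  ultimately have "q x - c * exp 0 / (Z + c * (exp 0 - 1)) = 0"
    by (intro DERIV_local_max[where d = 1]) auto
  then show ?thesis by (simp add: c_def Z_def)
qed

lemma exp_moment_pos:
  fixes Qpre :: "real \<Rightarrow> 'x::finite \<Rightarrow> 'x \<Rightarrow> real"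
  assumes T: "0 \<le> T" and gen_pre: "is_generator T Qpre"
    and fwd_pre: "forward_sol T Qpre (dirac x0) ppre"
  shows "0 < (\<Sum>x\<in>UNIV. ppre T x * exp (g x))"
proof -
  obtain h where h_pos: "\<And>t x. t \<in> {0..T} \<Longrightarrow> 0 < h t x"
    and h0: "h 0 x0 = (\<Sum>x\<in>UNIV. ppre T x * exp (g x))"
    by (rule exp_moment_backward_sol[OF T gen_pre fwd_pre, where g = g]) blast
  have "0 < h 0 x0" using T by (intro h_pos) simp
  then show ?thesis by (simp add: h0)
qed

lemma J_obj_finite_kl:
  "path_kl T Qpre Q p = ennreal K \<Longrightarrow> 0 \<le> K \<Longrightarrow>
    J_obj T \<alpha> r Qpre Q p = ereal ((\<Sum>x\<in>UNIV. p T x * r x) - \<alpha> * K)"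
  by (simp add: J_obj_def)

text \<open>Comparing with the h-transform, whose objective value is \<alpha> ln E[exp (r / \<alpha>)], bounds the
  path divergence of a maximizer.\<close>
lemma path_kl_of_maximizer_le:
  fixes Qpre Qstar :: "real \<Rightarrow> 'x::finite \<Rightarrow> 'x \<Rightarrow> real"
  assumes T: "0 \<le> T" and "0 < \<alpha>" and gen_pre: "is_generator T Qpre"
    and fwd_pre: "forward_sol T Qpre (dirac x0) ppre"
    and opt: "\<And>Q p. is_generator T Q \<Longrightarrow> forward_sol T Q (dirac x0) p \<Longrightarrow>
              J_obj T \<alpha> r Qpre Q p \<le> J_obj T \<alpha> r Qpre Qstar pstar"
  obtains K where "path_kl T Qpre Qstar pstar = ennreal K" and "0 \<le> K"
    and "K \<le> (\<Sum>x\<in>UNIV. pstar T x * (r x / \<alpha>)) - ln (\<Sum>x\<in>UNIV. ppre T x * exp (r x / \<alpha>))"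
proof -
  define Z where "Z = (\<Sum>x\<in>UNIV. ppre T x * exp (r x / \<alpha>))"
  have reward: "(\<Sum>x\<in>UNIV. p x * r x) = \<alpha> * (\<Sum>x\<in>UNIV. p x * (r x / \<alpha>))" for p :: "'x \<Rightarrow> real"
    using \<open>0 < \<alpha>\<close> by (simp add: sum_distrib_left)
  obtain Q1 p1 where gen1: "is_generator T Q1" and fwd1: "forward_sol T Q1 (dirac x0) p1"
    and kl1: "path_kl T Qpre Q1 p1 = ennreal ((\<Sum>x\<in>UNIV. p1 T x * (r x / \<alpha>)) - ln Z)"
    and kl1_nonneg: "0 \<le> (\<Sum>x\<in>UNIV. p1 T x * (r x / \<alpha>)) - ln Z"
    unfolding Z_def by (rule log_exp_moment_attained[OF T gen_pre fwd_pre, where g = "\<lambda>x. r x / \<alpha>"]) blast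
  have "J_obj T \<alpha> r Qpre Q1 p1 = ereal (\<alpha> * ln Z)"
    using J_obj_finite_kl[OF kl1 kl1_nonneg] reward[of "p1 T"] by (simp add: algebra_simps)
  then have J_opt: "ereal (\<alpha> * ln Z) \<le> J_obj T \<alpha> r Qpre Qstar pstar"
    using opt[OF gen1 fwd1] by simp
  obtain K where K: "path_kl T Qpre Qstar pstar = ennreal K" and "0 \<le> K"
  proof (cases "path_kl T Qpre Qstar pstar" rule: ennreal_cases)
    case top
    then show ?thesis using J_opt \<open>0 < \<alpha>\<close> by (simp add: J_obj_def)
  qed
  have "\<alpha> * ln Z \<le> \<alpha> * ((\<Sum>x\<in>UNIV. pstar T x * (r x / \<alpha>)) - K)"
    using J_opt J_obj_finite_kl[OF K \<open>0 \<le> K\<close>] reward by (simp add: right_diff_distrib)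
  then have "K \<le> (\<Sum>x\<in>UNIV. pstar T x * (r x / \<alpha>)) - ln Z" using \<open>0 < \<alpha>\<close> by simp
  then show thesis using that K \<open>0 \<le> K\<close> unfolding Z_def by blast
qed

theorem theorem1:
  fixes T \<alpha> :: real
    and r :: "'x::finite \<Rightarrow> real"
    and x0 :: 'x
    and Qpre Qstar :: "real \<Rightarrow> 'x \<Rightarrow> 'x \<Rightarrow> real"
    and ppre pstar :: "real \<Rightarrow> 'x \<Rightarrow> real"
  assumes "T > 0" and "\<alpha> > 0"
    and "is_generator T Qpre"
    and "forward_sol T Qpre (dirac x0) ppre"
    and "is_generator T Qstar"
    and "forward_sol T Qstar (dirac x0) pstar"
    and opt: "\<And>Q p. is_generator T Q \<Longrightarrow> forward_sol T Q (dirac x0) p \<Longrightarrow>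
              J_obj T \<alpha> r Qpre Q p \<le> J_obj T \<alpha> r Qpre Qstar pstar"
  shows "\<exists>c::real. \<forall>x. pstar T x = c * exp (r x / \<alpha>) * ppre T x"
proof -
  note gen_pre = assms(3) and fwd_pre = assms(4) and gen = assms(5) and fwd = assms(6)
  have T: "0 \<le> T" using \<open>T > 0\<close> by simp
  define g0 where "g0 x = r x / \<alpha>" for x
  define Z where "Z = (\<Sum>x\<in>UNIV. ppre T x * exp (g0 x))"
  obtain K where K: "path_kl T Qpre Qstar pstar = ennreal K" and "0 \<le> K"
    and K_le: "K \<le> (\<Sum>x\<in>UNIV. pstar T x * g0 x) - ln Z"
    unfolding g0_def Z_def by (rule path_kl_of_maximizer_le[OF T \<open>\<alpha> > 0\<close> gen_pre fwd_pre opt]) blast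
  have "(\<Sum>x\<in>UNIV. pstar T x * g x) - ln (\<Sum>x\<in>UNIV. ppre T x * exp (g x))
        \<le> (\<Sum>x\<in>UNIV. pstar T x * g0 x) - ln Z" for g
    using log_exp_moment_le_path_kl[OF T gen_pre fwd_pre gen fwd, of g] K \<open>0 \<le> K\<close> K_le
    by (auto simp: ennreal_le_iff2 ennreal_le_iff)
  moreover have "0 < Z" unfolding Z_def by (rule exp_moment_pos[OF T gen_pre fwd_pre])
  ultimately have "pstar T x = ppre T x * exp (g0 x) / Z" for x
    unfolding Z_def by (rule log_sum_exp_maximizer[rotated])
  then show ?thesis by (intro exI[of _ "1 / Z"]) (simp add: g0_def)
qed

end
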